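(* Let $\mathbb{F}\in\{\mathbb{R},\mathbb{C}\}$, let $A_1,A_2,\ldots$ be a sequence of matrices in $\mathbb{F}^{n\times n}$, and let $\mu$ be a matrix norm on $\mathbb{F}^{n\times n}$. Suppose that $\sum_{i=1}^\infty(\max(\mu(A_i),1)-1)$ converges and that $\sum_{i=1}^\infty(1-\min(\mu(A_i),1))$ diverges. Then all general products from $A_1,A_2,\ldots$ converge to $0$: for every permutation $\sigma$ of the positive integers, every integer $p\ge0$, and every sequence $(C_{p,r})_{r\ge1}$ of general products as defined below, $\lim_{r\to\infty}C_{p,r}=0$.
   Context: A matrix norm is a submultiplicative norm on $\mathbb{F}^{n\times n}$. General products: given a permutation $\sigma$ of the positive integers, set $B_i=A_{\sigma(i)}$; for an integer $p\ge0$ and each $r\ge1$, $C_{p,r}$ is a product of the matrices $B_{p+1},\ldots,B_{p+r}$, each used exactly once, taken in some order (the order may be chosen arbitrarily and independently for each $r$). *)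

theory Defs
  imports "HOL-Analysis.Analysis"
begin

definition matrix_norm :: "('a::{real_normed_field} ^'n^'n \<Rightarrow> real) \<Rightarrow> bool" where
  "matrix_norm \<mu> \<longleftrightarrow>
     (\<forall>A. \<mu> A = 0 \<longleftrightarrow> A = 0) \<and>
     (\<forall>A. 0 \<le> \<mu> A) \<and>
     (\<forall>c A. \<mu> (\<chi> i j. c * A $ i $ j) = norm c * \<mu> A) \<and>
     (\<forall>A B. \<mu> (A + B) \<le> \<mu> A + \<mu> B) \<and>
     (\<forall>A B. \<mu> (A ** B) \<le> \<mu> A * \<mu> B)"

definition list_mat_prod :: "(nat \<Rightarrow> 'a::semiring_1^'n^'n) \<Rightarrow> nat list \<Rightarrow> 'a^'n^'n" where
  "list_mat_prod B xs = foldr (\<lambda>i M. B i ** M) xs (mat 1)"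

definition is_general_product ::
  "(nat \<Rightarrow> 'a::semiring_1^'n^'n) \<Rightarrow> nat \<Rightarrow> nat \<Rightarrow> 'a^'n^'n \<Rightarrow> bool" where
  "is_general_product B p r C \<longleftrightarrow>
     (\<exists>xs. distinct xs \<and> set xs = {p+1..p+r} \<and> C = list_mat_prod B xs)"

end

theory Submission
  imports Defs
begin

text \<open>By submultiplicativity, the \<open>\<mu>\<close>-norm of a general product is at most the product of the
  \<open>\<mu>(A\<^sub>i)\<close> over the indices used, and \<open>\<mu>(A\<^sub>i) \<le> exp (e\<^sub>i - d\<^sub>i)\<close> with excess
  \<open>e\<^sub>i = max \<mu>(A\<^sub>i) 1 - 1\<close> and deficit \<open>d\<^sub>i = 1 - min \<mu>(A\<^sub>i) 1\<close>. The excesses have a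
  finite sum, whereas the deficits summed over \<open>\<sigma>{p+1..p+r}\<close> diverge, since these index sets
  eventually contain every index outside the finite set \<open>\<sigma>{1..p}\<close>. So the norms of the
  products tend to 0, and so do their entries: sandwiching a matrix between matrix units shows
  that each entry is bounded by a multiple of its \<open>\<mu>\<close>-norm.\<close>

lemma matrix_norm_nonneg: "matrix_norm \<mu> \<Longrightarrow> 0 \<le> \<mu> A"
  and matrix_norm_eq_0_iff: "matrix_norm \<mu> \<Longrightarrow> \<mu> A = 0 \<longleftrightarrow> A = 0"
  and matrix_norm_scale: "matrix_norm \<mu> \<Longrightarrow> \<mu> (\<chi> i j. c * A $ i $ j) = norm c * \<mu> A"
  and matrix_norm_mult_le: "matrix_norm \<mu> \<Longrightarrow> \<mu> (A ** B) \<le> \<mu> A * \<mu> B"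
  by (simp_all add: matrix_norm_def)

definition matrix_unit :: "'n::finite \<Rightarrow> 'n \<Rightarrow> 'a::semiring_1^'n^'n" where
  "matrix_unit k l = (\<chi> a b. of_bool (a = k \<and> b = l))"

lemma matrix_unit_nonzero: "matrix_unit k l \<noteq> 0"
  by (simp add: matrix_unit_def vec_eq_iff)

lemma matrix_unit_mult_left: "matrix_unit i i ** M = (\<chi> a b. of_bool (a = i) * M $ i $ b)"
  by (auto simp add: matrix_unit_def matrix_matrix_mult_def vec_eq_iff sum.If_cases)

lemma matrix_unit_sandwich:
  "matrix_unit i i ** M ** matrix_unit j j = (\<chi> a b. M $ i $ j * matrix_unit i j $ a $ b)"
  by (auto simp add: matrix_unit_mult_left matrix_unit_def matrix_matrix_mult_def vec_eq_iff
      sum.If_cases)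

lemma matrix_norm_entry_bound:
  fixes \<mu> :: "'a::real_normed_field^'n::finite^'n \<Rightarrow> real"
  assumes "matrix_norm \<mu>"
  obtains K where "\<And>M. norm (M $ i $ j) \<le> K * \<mu> M"
proof
  fix M :: "'a^'n^'n"
  let ?E = "matrix_unit :: 'n \<Rightarrow> 'n \<Rightarrow> 'a^'n^'n"
  have pos: "0 < \<mu> (?E i j)"
    using assms matrix_unit_nonzero
    by (metis matrix_norm_eq_0_iff matrix_norm_nonneg order_le_less)
  have "norm (M $ i $ j) * \<mu> (?E i j) = \<mu> (?E i i ** M ** ?E j j)"
    using assms by (simp add: matrix_unit_sandwich matrix_norm_scale)
  also have "\<dots> \<le> \<mu> (?E i i) * \<mu> M * \<mu> (?E j j)"
    using assms by (meson matrix_norm_mult_le matrix_norm_nonneg mult_right_mono order_trans)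
  finally show "norm (M $ i $ j) \<le> \<mu> (?E i i) * \<mu> (?E j j) / \<mu> (?E i j) * \<mu> M"
    using pos by (simp add: field_simps)
qed

lemma matrix_norm_tendsto_0_imp_tendsto_0:
  fixes \<mu> :: "'a::real_normed_field^'n::finite^'n \<Rightarrow> real"
  assumes "matrix_norm \<mu>" and "((\<lambda>x. \<mu> (f x)) \<longlongrightarrow> 0) F"
  shows "(f \<longlongrightarrow> 0) F"
proof (intro vec_tendstoI)
  fix i j
  obtain K where K: "\<And>M. norm (M $ i $ j) \<le> K * \<mu> M"
    using matrix_norm_entry_bound[OF assms(1), where i = i and j = j] by blast
  have "((\<lambda>x. f x $ i $ j) \<longlongrightarrow> 0) F"
    by (rule Lim_null_comparison[where g = "\<lambda>x. K * \<mu> (f x)"])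
      (use K tendsto_mult_right_zero[OF assms(2)] in auto)
  then show "((\<lambda>x. f x $ i $ j) \<longlongrightarrow> 0 $ i $ j) F"
    by simp
qed

lemma matrix_norm_list_mat_prod_le:
  assumes "matrix_norm \<mu>" and "xs \<noteq> []"
  shows "\<mu> (list_mat_prod B xs) \<le> (\<Prod>i\<leftarrow>xs. \<mu> (B i))"
  using assms(2)
proof (induction xs)
  case (Cons i ys)
  show ?case
  proof (cases "ys = []")
    case True
    then show ?thesis by (simp add: list_mat_prod_def)
  next
    case False
    have "\<mu> (list_mat_prod B (i # ys)) \<le> \<mu> (B i) * \<mu> (list_mat_prod B ys)"
      using assms(1) by (simp add: list_mat_prod_def matrix_norm_mult_le)
    also have "\<dots> \<le> \<mu> (B i) * (\<Prod>i\<leftarrow>ys. \<mu> (B i))"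
      using Cons False assms(1) by (simp add: mult_left_mono matrix_norm_nonneg)
    finally show ?thesis by simp
  qed
qed simp

lemma matrix_norm_general_product_le:
  assumes "matrix_norm \<mu>" and "is_general_product B p r C" and "1 \<le> r"
  shows "\<mu> C \<le> (\<Prod>i\<in>{p+1..p+r}. \<mu> (B i))"
proof -
  obtain xs where xs: "distinct xs" "set xs = {p+1..p+r}" "C = list_mat_prod B xs"
    using assms(2) unfolding is_general_product_def by blast
  have "xs \<noteq> []"
    using xs(2) assms(3) by auto
  then have "\<mu> C \<le> (\<Prod>i\<leftarrow>xs. \<mu> (B i))"
    using matrix_norm_list_mat_prod_le[OF assms(1)] xs(3) by simp
  also have "\<dots> = (\<Prod>i\<in>{p+1..p+r}. \<mu> (B i))"
    using xs(1,2) by (metis prod.distinct_set_conv_list)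
  finally show ?thesis .
qed

lemma prod_le_exp_excess_minus_deficit:
  fixes a :: "nat \<Rightarrow> real"
  assumes "\<And>k. 0 \<le> a k" and "summable (\<lambda>k. max (a k) 1 - 1)" and "finite S"
  shows "(\<Prod>k\<in>S. a k) \<le> exp ((\<Sum>k. max (a k) 1 - 1) - (\<Sum>k\<in>S. 1 - min (a k) 1))"
proof -
  have "a k \<le> exp ((max (a k) 1 - 1) - (1 - min (a k) 1))" for k
    using exp_ge_add_one_self[of "(max (a k) 1 - 1) - (1 - min (a k) 1)"]
    by (simp add: max_def min_def split: if_splits)
  then have "(\<Prod>k\<in>S. a k) \<le> (\<Prod>k\<in>S. exp ((max (a k) 1 - 1) - (1 - min (a k) 1)))"
    by (intro prod_mono) (simp add: assms(1))
  also have "\<dots> = exp ((\<Sum>k\<in>S. max (a k) 1 - 1) - (\<Sum>k\<in>S. 1 - min (a k) 1))"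
    by (simp only: sum_subtractf[symmetric] exp_sum[OF assms(3)])
  also have "\<dots> \<le> exp ((\<Sum>k. max (a k) 1 - 1) - (\<Sum>k\<in>S. 1 - min (a k) 1))"
    using sum_le_suminf[OF assms(2,3)] by simp
  finally show ?thesis .
qed

lemma sum_tendsto_top_if_not_summable:
  fixes g :: "nat \<Rightarrow> real"
  assumes "\<And>k. 0 \<le> g k" and "\<not> summable g" and "finite F" and "\<And>r. finite (S r)"
    and "\<And>N. eventually (\<lambda>r. {..N} \<subseteq> S r \<union> F) sequentially"
  shows "filterlim (\<lambda>r. sum g (S r)) at_top sequentially"
  unfolding filterlim_at_top
proof
  fix c :: real
  obtain N where N: "c + sum g F < sum g {..N}"
    using bounded_imp_summable[of g "c + sum g F"] assms(1,2) by (meson not_le)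
  show "eventually (\<lambda>r. c \<le> sum g (S r)) sequentially"
    using assms(5)[of N]
  proof eventually_elim
    case (elim r)
    have "sum g {..N} \<le> sum g (S r \<union> F)"
      using elim assms by (intro sum_mono2) auto
    also have "\<dots> \<le> sum g (S r) + sum g F"
      using assms by (simp add: sum_Un sum_nonneg)
    finally show ?case
      using N by linarith
  qed
qed

lemma bij_betw_image_interval_exhausts:
  fixes \<sigma> :: "nat \<Rightarrow> nat"
  assumes "bij_betw \<sigma> {1..} {1..}"
  shows "eventually (\<lambda>r. {..N} \<subseteq> \<sigma> ` {p+1..p+r} \<union> insert 0 (\<sigma> ` {1..p})) sequentially"
proof -
  have "{1..N} \<subseteq> \<sigma> ` {1..}"
    using assms by (auto simp: bij_betw_def)
  then obtain I where I: "I \<subseteq> {1..}" "finite I" "{1..N} = \<sigma> ` I"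
    using finite_subset_image[OF finite_atLeastAtMost] by metis
  show ?thesis
  proof (rule eventually_sequentiallyI[of "Max I"])
    fix r assume "Max I \<le> r"
    then have "I \<subseteq> {1..p} \<union> {p+1..p+r}"
      using I(1) Max_ge[OF I(2)] by (force simp: subset_eq)
    then have "{1..N} \<subseteq> \<sigma> ` {1..p} \<union> \<sigma> ` {p+1..p+r}"
      unfolding I(3) by blast
    moreover have "{..N} \<subseteq> insert 0 {1..N}"
      by auto
    ultimately show "{..N} \<subseteq> \<sigma> ` {p+1..p+r} \<union> insert 0 (\<sigma> ` {1..p})"
      by blast
  qed
qed

lemma general_products_tendsto_0:
  fixes A :: "nat \<Rightarrow> 'a::real_normed_field^'n::finite^'n"
  assumes \<mu>: "matrix_norm \<mu>"
    and excess_Suc: "summable (\<lambda>i. max (\<mu> (A (Suc i))) 1 - 1)"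
    and deficit_Suc: "\<not> summable (\<lambda>i. 1 - min (\<mu> (A (Suc i))) 1)"
    and \<sigma>: "bij_betw \<sigma> {1..} {1..}"
    and C: "\<forall>r\<ge>1. is_general_product (\<lambda>i. A (\<sigma> i)) p r (C r)"
  shows "C \<longlonglongrightarrow> 0"
proof (rule matrix_norm_tendsto_0_imp_tendsto_0[OF \<mu>])
  have excess: "summable (\<lambda>i. max (\<mu> (A i)) 1 - 1)"
    using excess_Suc summable_Suc_iff[of "\<lambda>i. max (\<mu> (A i)) 1 - 1"] by simp
  have deficit: "\<not> summable (\<lambda>i. 1 - min (\<mu> (A i)) 1)"
    using deficit_Suc summable_Suc_iff[of "\<lambda>i. 1 - min (\<mu> (A i)) 1"] by simp
  define S where "S r = \<sigma> ` {p+1..p+r}" for r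
  define X where "X = (\<Sum>i. max (\<mu> (A i)) 1 - 1)"
  define D where "D r = (\<Sum>i\<in>S r. 1 - min (\<mu> (A i)) 1)" for r
  have bound: "eventually (\<lambda>r. norm (\<mu> (C r)) \<le> exp (X - D r)) sequentially"
  proof (rule eventually_sequentiallyI[of 1])
    fix r :: nat assume "1 \<le> r"
    have "inj_on \<sigma> {p+1..p+r}"
      using \<sigma> by (rule bij_betw_imp_inj_on[THEN inj_on_subset]) auto
    have "\<mu> (C r) \<le> (\<Prod>i\<in>{p+1..p+r}. \<mu> (A (\<sigma> i)))"
      using matrix_norm_general_product_le[OF \<mu>] C \<open>1 \<le> r\<close> by blast
    also have "\<dots> = (\<Prod>i\<in>S r. \<mu> (A i))"
      using \<open>inj_on \<sigma> {p+1..p+r}\<close> by (simp add: S_def prod.reindex)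
    also have "\<dots> \<le> exp (X - D r)"
      unfolding X_def D_def
      by (rule prod_le_exp_excess_minus_deficit[OF matrix_norm_nonneg[OF \<mu>] excess])
        (simp add: S_def)
    finally show "norm (\<mu> (C r)) \<le> exp (X - D r)"
      by (simp add: matrix_norm_nonneg[OF \<mu>])
  qed
  have "filterlim D at_top sequentially"
    unfolding D_def
    by (rule sum_tendsto_top_if_not_summable[OF _ deficit, where F = "insert 0 (\<sigma> ` {1..p})"])
      (use bij_betw_image_interval_exhausts[OF \<sigma>] in \<open>simp_all add: S_def\<close>)
  then have "filterlim (\<lambda>r. - X + D r) at_top sequentially"
    by (rule filterlim_tendsto_add_at_top[OF tendsto_const])
  then have "filterlim (\<lambda>r. X - D r) at_bot sequentially"
    by (simp add: filterlim_uminus_at_top)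
  then have "(\<lambda>r. exp (X - D r)) \<longlonglongrightarrow> 0"
    by (rule filterlim_compose[OF exp_at_bot])
  then show "(\<lambda>r. \<mu> (C r)) \<longlonglongrightarrow> 0"
    by (rule Lim_null_comparison[OF bound])
qed

theorem theorem3p2:
  shows "(\<forall>(A :: nat \<Rightarrow> real^'n::finite^'n) (\<mu> :: real^'n^'n \<Rightarrow> real).
      matrix_norm \<mu> \<longrightarrow>
      summable (\<lambda>i. max (\<mu> (A (Suc i))) 1 - 1) \<longrightarrow>
      \<not> summable (\<lambda>i. 1 - min (\<mu> (A (Suc i))) 1) \<longrightarrow>
      (\<forall>(\<sigma> :: nat \<Rightarrow> nat) (p :: nat) (C :: nat \<Rightarrow> real^'n::finite^'n).
         bij_betw \<sigma> {1..} {1..} \<longrightarrow>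
         (\<forall>r\<ge>1. is_general_product (\<lambda>i. A (\<sigma> i)) p r (C r)) \<longrightarrow>
         C \<longlonglongrightarrow> 0))
    \<and> (\<forall>(A :: nat \<Rightarrow> complex^'n::finite^'n) (\<mu> :: complex^'n^'n \<Rightarrow> real).
      matrix_norm \<mu> \<longrightarrow>
      summable (\<lambda>i. max (\<mu> (A (Suc i))) 1 - 1) \<longrightarrow>
      \<not> summable (\<lambda>i. 1 - min (\<mu> (A (Suc i))) 1) \<longrightarrow>
      (\<forall>(\<sigma> :: nat \<Rightarrow> nat) (p :: nat) (C :: nat \<Rightarrow> complex^'n::finite^'n).
         bij_betw \<sigma> {1..} {1..} \<longrightarrow>
         (\<forall>r\<ge>1. is_general_product (\<lambda>i. A (\<sigma> i)) p r (C r)) \<longrightarrow>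
         C \<longlonglongrightarrow> 0))"
  by (intro conjI allI impI) (rule general_products_tendsto_0; assumption)+

end
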